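(* Let $P$ be a finite poset with $P \in \mathcal{N}_2$. Then every convex subposet $Q$ of $P$ (a subset $Q\subseteq P$ such that $x\le z\le y$ with $x,y\in Q$ implies $z\in Q$, with the induced order) also belongs to $\mathcal{N}_2$.
   Context: All posets are finite. An edge of a poset is a covering relation $x \lessdot y$. A chain cover of a poset $P$ is a set of pairwise disjoint saturated chains whose union is $P$. A labeling of $P$ is a map $\lambda:P\to\mathbb{R}$. For a chain cover $\mathcal{C}$, $\mathcal{C}$-sorting a labeling means: for each chain $\bm{c}\in\mathcal{C}$, permute the labels $\{\lambda(v): v\in \bm{c}\}$ among the elements of $\bm{c}$ so that they are non-decreasing from the minimum of $\bm{c}$ to its maximum. A finite poset $P$ has the non-messing-up property, written $P\in\mathcal{N}_2$ (via $\{\mathcal{C}_1,\mathcal{C}_2\}$), if there exists an unordered pair of chain covers $\{\mathcal{C}_1,\mathcal{C}_2\}$ of $P$ such that (1) for every labeling of $P$ and for $i=1$ and $i=2$, first $\mathcal{C}_i$-sorting and then $\mathcal{C}_{3-i}$-sorting leaves the labels non-decreasing along every chain of $\mathcal{C}_i$; and (2) every edge of $P$ is contained in some chain of $\mathcal{C}_1$ or of $\mathcal{C}_2$. *)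

theory Defs
  imports Complex_Main "HOL-Library.Multiset"
begin

definition is_poset :: "'a set \<Rightarrow> ('a \<Rightarrow> 'a \<Rightarrow> bool) \<Rightarrow> bool" where
  "is_poset P le \<longleftrightarrow>
     (\<forall>x\<in>P. le x x) \<and>
     (\<forall>x\<in>P. \<forall>y\<in>P. le x y \<and> le y x \<longrightarrow> x = y) \<and>
     (\<forall>x\<in>P. \<forall>y\<in>P. \<forall>z\<in>P. le x y \<and> le y z \<longrightarrow> le x z)"

definition covers :: "'a set \<Rightarrow> ('a \<Rightarrow> 'a \<Rightarrow> bool) \<Rightarrow> 'a \<Rightarrow> 'a \<Rightarrow> bool" where
  "covers P le x y \<longleftrightarrow> x \<in> P \<and> y \<in> P \<and> le x y \<and> x \<noteq> y \<and>
     \<not> (\<exists>z\<in>P. le x z \<and> le z y \<and> z \<noteq> x \<and> z \<noteq> y)"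

definition saturated_chain :: "'a set \<Rightarrow> ('a \<Rightarrow> 'a \<Rightarrow> bool) \<Rightarrow> 'a set \<Rightarrow> bool" where
  "saturated_chain P le c \<longleftrightarrow> c \<noteq> {} \<and> c \<subseteq> P \<and>
     (\<forall>x\<in>c. \<forall>y\<in>c. le x y \<or> le y x) \<and>
     (\<forall>x\<in>c. \<forall>y\<in>c. le x y \<and> x \<noteq> y \<and>
        \<not> (\<exists>z\<in>c. le x z \<and> le z y \<and> z \<noteq> x \<and> z \<noteq> y) \<longrightarrow> covers P le x y)"

definition chain_cover :: "'a set \<Rightarrow> ('a \<Rightarrow> 'a \<Rightarrow> bool) \<Rightarrow> 'a set set \<Rightarrow> bool" where
  "chain_cover P le C \<longleftrightarrow> (\<forall>c\<in>C. saturated_chain P le c) \<and>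
     (\<forall>c\<in>C. \<forall>d\<in>C. c \<noteq> d \<longrightarrow> c \<inter> d = {}) \<and> \<Union>C = P"

definition chain_sort :: "('a \<Rightarrow> 'a \<Rightarrow> bool) \<Rightarrow> 'a set set \<Rightarrow> ('a \<Rightarrow> real) \<Rightarrow> ('a \<Rightarrow> real)" where
  "chain_sort le C lab = (\<lambda>x.
     if \<exists>c\<in>C. x \<in> c then
       (let c = (THE c. c \<in> C \<and> x \<in> c) in
         sorted_list_of_multiset (image_mset lab (mset_set c)) ! card {y\<in>c. le y x \<and> y \<noteq> x})
     else lab x)"

definition nondecreasing_on_chains :: "('a \<Rightarrow> 'a \<Rightarrow> bool) \<Rightarrow> 'a set set \<Rightarrow> ('a \<Rightarrow> real) \<Rightarrow> bool" where
  "nondecreasing_on_chains le C lab \<longleftrightarrow>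
     (\<forall>c\<in>C. \<forall>x\<in>c. \<forall>y\<in>c. le x y \<longrightarrow> lab x \<le> lab y)"

definition N2_via :: "'a set \<Rightarrow> ('a \<Rightarrow> 'a \<Rightarrow> bool) \<Rightarrow> 'a set set \<Rightarrow> 'a set set \<Rightarrow> bool" where
  "N2_via P le C1 C2 \<longleftrightarrow> chain_cover P le C1 \<and> chain_cover P le C2 \<and>
     (\<forall>lab :: 'a \<Rightarrow> real.
        nondecreasing_on_chains le C1 (chain_sort le C2 (chain_sort le C1 lab)) \<and>
        nondecreasing_on_chains le C2 (chain_sort le C1 (chain_sort le C2 lab))) \<and>
     (\<forall>x y. covers P le x y \<longrightarrow> (\<exists>c\<in>C1 \<union> C2. x \<in> c \<and> y \<in> c))"

definition N2 :: "'a set \<Rightarrow> ('a \<Rightarrow> 'a \<Rightarrow> bool) \<Rightarrow> bool" where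
  "N2 P le \<longleftrightarrow> (\<exists>C1 C2. N2_via P le C1 C2)"

definition convex_subset :: "'a set \<Rightarrow> ('a \<Rightarrow> 'a \<Rightarrow> bool) \<Rightarrow> 'a set \<Rightarrow> bool" where
  "convex_subset P le Q \<longleftrightarrow> Q \<subseteq> P \<and>
     (\<forall>x\<in>Q. \<forall>y\<in>Q. \<forall>z\<in>P. le x z \<and> le z y \<longrightarrow> z \<in> Q)"

end

theory Submission
  imports Defs
begin

(* Restrict both chain covers of P to Q: by convexity a saturated chain of P meets Q in a
   saturated chain of Q, and every edge of Q is an edge of P.  A labeling f of Q is tested by
   extending it to P with a constant a <= min f on the elements outside Q that lie above no
   element of Q, and a constant b >= max f on the elements outside Q that lie above Q.  Along
   every chain of P the extension then reads a ... a, f on the part in Q, b ... b, so sorting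
   it along the chain only sorts the part in Q: chain sorting commutes with the extension.
   Hence the two-step sorts of P restrict to those of Q. *)

definition finite_chain :: "('a \<Rightarrow> 'a \<Rightarrow> bool) \<Rightarrow> 'a set \<Rightarrow> bool" where
  "finite_chain le c \<longleftrightarrow> finite c \<and> is_poset c le \<and> (\<forall>x\<in>c. \<forall>y\<in>c. le x y \<or> le y x)"

definition chain_rank :: "('a \<Rightarrow> 'a \<Rightarrow> bool) \<Rightarrow> 'a set \<Rightarrow> 'a \<Rightarrow> nat" where
  "chain_rank le c x = card {y\<in>c. le y x \<and> y \<noteq> x}"

definition sort_along :: "('a \<Rightarrow> 'a \<Rightarrow> bool) \<Rightarrow> 'a set \<Rightarrow> ('a \<Rightarrow> 'b::linorder) \<Rightarrow> 'a \<Rightarrow> 'b" where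
  "sort_along le c lab x = sorted_list_of_multiset (image_mset lab (mset_set c)) ! chain_rank le c x"

lemma is_poset_subset: "is_poset P le \<Longrightarrow> Q \<subseteq> P \<Longrightarrow> is_poset Q le"
  unfolding is_poset_def by blast

lemma finite_chain_subset: "finite_chain le c \<Longrightarrow> d \<subseteq> c \<Longrightarrow> finite_chain le d"
  unfolding finite_chain_def using is_poset_subset finite_subset by blast

lemma saturated_chain_finite_chain:
  "finite P \<Longrightarrow> is_poset P le \<Longrightarrow> saturated_chain P le c \<Longrightarrow> finite_chain le c"
  unfolding finite_chain_def saturated_chain_def using is_poset_subset finite_subset by blast

lemma chain_rank_less:
  assumes "finite_chain le c" "x \<in> c" "y \<in> c" "le x y" "x \<noteq> y"
  shows "chain_rank le c x < chain_rank le c y"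
proof -
  have "{z\<in>c. le z x \<and> z \<noteq> x} \<subset> {z\<in>c. le z y \<and> z \<noteq> y}"
    using assms unfolding finite_chain_def is_poset_def by blast
  then show ?thesis
    using assms(1) unfolding chain_rank_def finite_chain_def by (simp add: psubset_card_mono)
qed

lemma chain_rank_le_iff:
  assumes "finite_chain le c" "x \<in> c" "y \<in> c"
  shows "chain_rank le c x \<le> chain_rank le c y \<longleftrightarrow> le x y"
  using chain_rank_less[OF assms(1)] assms unfolding finite_chain_def is_poset_def
  by (metis leD less_imp_le_nat order_refl)

lemma bij_betw_chain_rank:
  assumes "finite_chain le c"
  shows "bij_betw (chain_rank le c) c {..<card c}"
proof -
  have inj: "inj_on (chain_rank le c) c"
    using chain_rank_le_iff[OF assms] assms unfolding finite_chain_def is_poset_def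
    by (intro inj_onI) (metis order_refl)
  have "chain_rank le c x < card c" if "x \<in> c" for x
    using that assms unfolding chain_rank_def finite_chain_def
    by (intro psubset_card_mono) auto
  then have "chain_rank le c ` c \<subseteq> {..<card c}" by auto
  moreover have "card (chain_rank le c ` c) = card {..<card c}"
    using card_image[OF inj] by simp
  ultimately show ?thesis
    using inj by (simp add: bij_betw_def card_subset_eq)
qed

lemma length_sorted_list_of_multiset_image:
  "length (sorted_list_of_multiset (image_mset lab (mset_set c))) = card c"
  by (metis mset_sorted_list_of_multiset size_image_mset size_mset size_mset_set)

lemma sort_along_mono:
  assumes "finite_chain le c" "x \<in> c" "y \<in> c" "le x y"
  shows "sort_along le c lab x \<le> sort_along le c lab y"
  unfolding sort_along_def
  using assms chain_rank_le_iff[OF assms(1-3)] bij_betw_apply[OF bij_betw_chain_rank[OF assms(1)] assms(3)]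
  by (intro sorted_nth_mono) (simp_all add: length_sorted_list_of_multiset_image)

lemma image_mset_sort_along:
  assumes "finite_chain le c"
  shows "image_mset (sort_along le c lab) (mset_set c) = image_mset lab (mset_set c)"
proof -
  let ?S = "sorted_list_of_multiset (image_mset lab (mset_set c))"
  have "image_mset (sort_along le c lab) (mset_set c)
        = image_mset (nth ?S) (image_mset (chain_rank le c) (mset_set c))"
    unfolding sort_along_def by (simp add: image_mset.compositionality o_def)
  also have "\<dots> = image_mset (nth ?S) (mset [0..<length ?S])"
    using bij_betw_chain_rank[OF assms]
    by (simp add: image_mset_mset_set bij_betw_def length_sorted_list_of_multiset_image
        lessThan_atLeast0)
  also have "\<dots> = mset ?S" by (metis map_nth mset_map)
  finally show ?thesis by simp
qed

lemma sort_along_in_image: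
  assumes "finite_chain le c" "x \<in> c"
  shows "sort_along le c lab x \<in> lab ` c"
proof -
  have "sort_along le c lab x \<in># image_mset (sort_along le c lab) (mset_set c)"
    using assms unfolding finite_chain_def by simp
  then show ?thesis
    using assms(1) unfolding image_mset_sort_along[OF assms(1)] finite_chain_def by simp
qed

lemma sort_along_mono_fixpoint:
  assumes "finite_chain le c" "x \<in> c"
    and mono: "\<And>x y. x \<in> c \<Longrightarrow> y \<in> c \<Longrightarrow> le x y \<Longrightarrow> g x \<le> g y"
  shows "sort_along le c g x = g x"
proof -
  define n where "n = card c"
  define e where "e = the_inv_into c (chain_rank le c)"
  have bij: "bij_betw (chain_rank le c) c {..<n}"
    unfolding n_def using bij_betw_chain_rank[OF assms(1)] .
  have e_mem: "e i \<in> c" and rank_e: "chain_rank le c (e i) = i" if "i < n" for i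
    using that bij_betw_apply[OF bij_betw_the_inv_into[OF bij]] f_the_inv_into_f_bij_betw[OF bij]
    unfolding e_def by auto
  define L where "L = map (g \<circ> e) [0..<n]"
  have "sorted L"
    unfolding L_def sorted_iff_nth_mono
    using mono e_mem chain_rank_le_iff[OF assms(1) e_mem e_mem] rank_e by (simp, metis le_less_trans)
  moreover have "mset L = image_mset g (mset_set c)"
  proof -
    have "mset L = image_mset g (image_mset e (mset_set {..<n}))"
      unfolding L_def by (simp add: image_mset.compositionality lessThan_atLeast0)
    also have "image_mset e (mset_set {..<n}) = mset_set c"
      using bij_betw_the_inv_into[OF bij] unfolding e_def
      by (simp add: image_mset_mset_set bij_betw_def)
    finally show ?thesis .
  qed
  ultimately have "sorted_list_of_multiset (image_mset g (mset_set c)) = L"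
    by (metis sorted_list_of_multiset_mset sorted_sort_id)
  moreover have "e (chain_rank le c x) = x"
    unfolding e_def using the_inv_into_f_f bij assms(2) by (metis bij_betw_def)
  ultimately show ?thesis
    unfolding sort_along_def L_def
    using bij_betw_apply[OF bij assms(2)] by simp
qed

lemma chain_sort_eq_sort_along:
  assumes "chain_cover P le C" "c \<in> C" "x \<in> c"
  shows "chain_sort le C lab x = sort_along le c lab x"
proof -
  have "(THE c. c \<in> C \<and> x \<in> c) = c"
    using assms unfolding chain_cover_def by (intro the_equality) auto
  then show ?thesis
    using assms unfolding chain_sort_def sort_along_def chain_rank_def Let_def by auto
qed

lemma chain_sort_outside:
  "chain_cover P le C \<Longrightarrow> x \<notin> P \<Longrightarrow> chain_sort le C lab x = lab x"
  unfolding chain_sort_def chain_cover_def by auto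

lemma chain_cover_finite_chain:
  "finite P \<Longrightarrow> is_poset P le \<Longrightarrow> chain_cover P le C \<Longrightarrow> c \<in> C \<Longrightarrow> finite_chain le c"
  unfolding chain_cover_def using saturated_chain_finite_chain by blast

lemma chain_sort_in_image:
  assumes "finite P" "is_poset P le" "chain_cover P le C" "x \<in> P"
  shows "chain_sort le C lab x \<in> lab ` P"
proof -
  obtain c where c: "c \<in> C" "x \<in> c"
    using assms(3,4) unfolding chain_cover_def by auto
  moreover have "c \<subseteq> P"
    using assms(3) c(1) unfolding chain_cover_def by blast
  ultimately show ?thesis
    using chain_sort_eq_sort_along[OF assms(3) c]
      sort_along_in_image[OF chain_cover_finite_chain[OF assms(1-3) c(1)] c(2), where lab = lab]
    by auto
qed

definition restrict_cover :: "'a set \<Rightarrow> 'a set set \<Rightarrow> 'a set set" where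
  "restrict_cover Q C = {c \<inter> Q | c. c \<in> C \<and> c \<inter> Q \<noteq> {}}"

lemma Int_mem_restrict_cover: "c \<in> C \<Longrightarrow> x \<in> c \<Longrightarrow> x \<in> Q \<Longrightarrow> c \<inter> Q \<in> restrict_cover Q C"
  unfolding restrict_cover_def by auto

lemma covers_convex_subset: "convex_subset P le Q \<Longrightarrow> covers Q le x y \<Longrightarrow> covers P le x y"
  unfolding convex_subset_def covers_def by blast

lemma saturated_chain_Int_convex:
  assumes "convex_subset P le Q" "saturated_chain P le c" "c \<inter> Q \<noteq> {}"
  shows "saturated_chain Q le (c \<inter> Q)"
  unfolding saturated_chain_def
proof (intro conjI ballI impI)
  fix x y
  assume xy: "x \<in> c \<inter> Q" "y \<in> c \<inter> Q"
    and gap: "le x y \<and> x \<noteq> y \<and> \<not> (\<exists>z\<in>c \<inter> Q. le x z \<and> le z y \<and> z \<noteq> x \<and> z \<noteq> y)"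
  have cP: "c \<subseteq> P" using assms(2) unfolding saturated_chain_def by blast
  have "z \<in> Q" if "z \<in> c" "le x z" "le z y" for z
    using assms(1) cP xy that unfolding convex_subset_def by blast
  then have "\<not> (\<exists>z\<in>c. le x z \<and> le z y \<and> z \<noteq> x \<and> z \<noteq> y)"
    using gap by blast
  then have "covers P le x y"
    using assms(2) xy gap unfolding saturated_chain_def by blast
  then show "covers Q le x y"
    using assms(1) xy unfolding covers_def convex_subset_def by blast
next
  fix x y assume "x \<in> c \<inter> Q" "y \<in> c \<inter> Q"
  then show "le x y \<or> le y x"
    using assms(2) unfolding saturated_chain_def by blast
qed (use assms in auto)

lemma chain_cover_restrict_cover:
  assumes "convex_subset P le Q" "chain_cover P le C"
  shows "chain_cover Q le (restrict_cover Q C)"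
  unfolding chain_cover_def
proof (intro conjI)
  show "\<forall>c\<in>restrict_cover Q C. saturated_chain Q le c"
    using assms saturated_chain_Int_convex[OF assms(1)]
    unfolding restrict_cover_def chain_cover_def by blast
  show "\<forall>c\<in>restrict_cover Q C. \<forall>d\<in>restrict_cover Q C. c \<noteq> d \<longrightarrow> c \<inter> d = {}"
    using assms(2) unfolding restrict_cover_def chain_cover_def by blast
  have "Q \<subseteq> \<Union>C"
    using assms unfolding chain_cover_def convex_subset_def by blast
  have "Q \<subseteq> \<Union> (restrict_cover Q C)"
  proof
    fix x assume "x \<in> Q"
    then obtain c where "c \<in> C" "x \<in> c"
      using \<open>Q \<subseteq> \<Union>C\<close> by blast
    then show "x \<in> \<Union> (restrict_cover Q C)"
      using Int_mem_restrict_cover[of c C x Q] \<open>x \<in> Q\<close> by blast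
  qed
  then show "\<Union> (restrict_cover Q C) = Q"
    unfolding restrict_cover_def by auto
qed

definition extend_labeling ::
    "'a set \<Rightarrow> ('a \<Rightarrow> 'a \<Rightarrow> bool) \<Rightarrow> 'b \<Rightarrow> 'b \<Rightarrow> ('a \<Rightarrow> 'b) \<Rightarrow> 'a \<Rightarrow> 'b" where
  "extend_labeling Q le a b f x = (if x \<in> Q then f x else if \<exists>q\<in>Q. le q x then b else a)"

lemma extend_labeling_mono:
  fixes f :: "'a \<Rightarrow> 'b::linorder"
  assumes "is_poset P le" "convex_subset P le Q" "a \<le> b"
    and "x \<in> P" "y \<in> P" "le x y"
    and "x \<in> Q \<Longrightarrow> f x \<le> b" "y \<in> Q \<Longrightarrow> a \<le> f y" "x \<in> Q \<Longrightarrow> y \<in> Q \<Longrightarrow> f x \<le> f y"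
  shows "extend_labeling Q le a b f x \<le> extend_labeling Q le a b f y"
proof -
  have QP: "Q \<subseteq> P"
    using assms(2) unfolding convex_subset_def by blast
  have above: "\<exists>q\<in>Q. le q y" if "\<exists>q\<in>Q. le q x"
    using that assms(1,4-6) QP unfolding is_poset_def by blast
  have not_above: "\<not> (\<exists>q\<in>Q. le q x)" if "x \<notin> Q" "y \<in> Q"
    using that assms(2,4,6) unfolding convex_subset_def by blast
  show ?thesis
    using assms(3,6-9) above not_above unfolding extend_labeling_def by auto
qed

lemma image_mset_extend_labeling:
  assumes "finite c"
    and "image_mset g (mset_set (c \<inter> Q)) = image_mset f (mset_set (c \<inter> Q))"
  shows "image_mset (extend_labeling Q le a b g) (mset_set c)
       = image_mset (extend_labeling Q le a b f) (mset_set c)"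
proof -
  have split: "mset_set c = mset_set (c \<inter> Q) + mset_set (c - Q)"
    using assms(1) by (metis Diff_disjoint Int_Diff_Un Int_Diff_disjoint finite_Diff
        finite_Int inf_commute mset_set_Union)
  have "image_mset (extend_labeling Q le a b h) (mset_set (c \<inter> Q)) = image_mset h (mset_set (c \<inter> Q))"
    for h
    using assms(1) by (intro image_mset_cong) (simp add: extend_labeling_def)
  moreover have "image_mset (extend_labeling Q le a b g) (mset_set (c - Q))
      = image_mset (extend_labeling Q le a b f) (mset_set (c - Q))"
    using assms(1) by (intro image_mset_cong) (simp add: extend_labeling_def)
  ultimately show ?thesis
    using assms(2) by (simp add: split)
qed

lemma chain_sort_restrict_cover_in_image:
  assumes "finite P" "is_poset P le" "convex_subset P le Q" "chain_cover P le C" "q \<in> Q"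
  shows "chain_sort le (restrict_cover Q C) f q \<in> f ` Q"
proof -
  have QP: "Q \<subseteq> P"
    using assms(3) unfolding convex_subset_def by blast
  show ?thesis
    using chain_sort_in_image[OF finite_subset[OF QP assms(1)] is_poset_subset[OF assms(2) QP]
        chain_cover_restrict_cover[OF assms(3,4)] assms(5)] .
qed

text \<open>The extension of the sorted labeling is monotone along c and takes the same values
  as the extension of f, so it is what sorting the extension of f along c produces.\<close>
lemma sort_along_extend_labeling:
  fixes f :: "'a \<Rightarrow> 'b::linorder"
  assumes "is_poset P le" "convex_subset P le Q" "finite_chain le c" "c \<subseteq> P" "a \<le> b"
    and bounds: "\<And>q. q \<in> c \<inter> Q \<Longrightarrow> a \<le> f q \<and> f q \<le> b"
    and "x \<in> c"
  shows "sort_along le c (extend_labeling Q le a b f) x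
       = extend_labeling Q le a b (sort_along le (c \<inter> Q) f) x"
proof -
  let ?s = "sort_along le (c \<inter> Q) f"
  let ?g = "extend_labeling Q le a b ?s"
  have fcQ: "finite_chain le (c \<inter> Q)"
    using finite_chain_subset[OF assms(3)] by blast
  have s_bounds: "a \<le> ?s q \<and> ?s q \<le> b" if q: "q \<in> c \<inter> Q" for q
  proof -
    obtain p where "p \<in> c \<inter> Q" "?s q = f p"
      using sort_along_in_image[OF fcQ q] by blast
    then show ?thesis
      using bounds by simp
  qed
  have "?g y \<le> ?g z" if yz: "y \<in> c" "z \<in> c" "le y z" for y z
  proof (rule extend_labeling_mono[OF assms(1,2,5)])
    show "y \<in> P" "z \<in> P" "le y z"
      using yz assms(4) by auto
    show "?s y \<le> b" if "y \<in> Q"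
      using s_bounds yz(1) that by blast
    show "a \<le> ?s z" if "z \<in> Q"
      using s_bounds yz(2) that by blast
    show "?s y \<le> ?s z" if "y \<in> Q" "z \<in> Q"
      using sort_along_mono[OF fcQ] yz that by blast
  qed
  then have "sort_along le c ?g x = ?g x"
    by (rule sort_along_mono_fixpoint[OF assms(3,7)])
  moreover have "image_mset ?g (mset_set c) = image_mset (extend_labeling Q le a b f) (mset_set c)"
    using assms(3) image_mset_sort_along[OF fcQ]
    by (intro image_mset_extend_labeling) (simp_all add: finite_chain_def)
  ultimately show ?thesis
    unfolding sort_along_def by simp
qed

lemma chain_sort_extend_labeling:
  assumes "finite P" "is_poset P le" "convex_subset P le Q" "chain_cover P le C" "a \<le> b"
    and bounds: "\<And>q. q \<in> Q \<Longrightarrow> a \<le> f q \<and> f q \<le> b"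
  shows "chain_sort le C (extend_labeling Q le a b f)
       = extend_labeling Q le a b (chain_sort le (restrict_cover Q C) f)"
proof
  fix x
  have QP: "Q \<subseteq> P"
    using assms(3) unfolding convex_subset_def by blast
  show "chain_sort le C (extend_labeling Q le a b f) x
      = extend_labeling Q le a b (chain_sort le (restrict_cover Q C) f) x"
  proof (cases "x \<in> P")
    case False
    then show ?thesis
      using chain_sort_outside[OF assms(4)] QP unfolding extend_labeling_def by auto
  next
    case True
    then obtain c where c: "c \<in> C" "x \<in> c"
      using assms(4) unfolding chain_cover_def by blast
    have "c \<subseteq> P"
      using assms(4) c(1) unfolding chain_cover_def saturated_chain_def by blast
    then have "chain_sort le C (extend_labeling Q le a b f) x
        = extend_labeling Q le a b (sort_along le (c \<inter> Q) f) x"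
      using chain_sort_eq_sort_along[OF assms(4) c] bounds
        sort_along_extend_labeling[OF assms(2,3) chain_cover_finite_chain[OF assms(1,2,4) c(1)] _ assms(5) _ c(2)]
      by simp
    also have "\<dots> = extend_labeling Q le a b (chain_sort le (restrict_cover Q C) f) x"
      using chain_sort_eq_sort_along[OF chain_cover_restrict_cover[OF assms(3,4)]
          Int_mem_restrict_cover[OF c]] c(2)
      unfolding extend_labeling_def by simp
    finally show ?thesis .
  qed
qed

lemma nondecreasing_on_restrict_cover:
  assumes "finite P" "is_poset P le" "convex_subset P le Q"
    and "chain_cover P le C1" "chain_cover P le C2"
    and sorted_P: "\<And>lab. nondecreasing_on_chains le C1 (chain_sort le C2 (chain_sort le C1 lab))"
  shows "nondecreasing_on_chains le (restrict_cover Q C1)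
           (chain_sort le (restrict_cover Q C2) (chain_sort le (restrict_cover Q C1) lab))"
proof (cases "Q = {}")
  case True
  then show ?thesis
    unfolding nondecreasing_on_chains_def restrict_cover_def by auto
next
  case False
  let ?s1 = "chain_sort le (restrict_cover Q C1) lab"
  let ?s2 = "chain_sort le (restrict_cover Q C2) ?s1"
  define a where "a = Min (lab ` Q)"
  define b where "b = Max (lab ` Q)"
  have "finite Q"
    using assms(1,3) finite_subset unfolding convex_subset_def by blast
  then have bounds: "a \<le> lab q \<and> lab q \<le> b" if "q \<in> Q" for q
    using that unfolding a_def b_def by simp
  then have "a \<le> b"
    using False by fastforce
  have s1_bounds: "a \<le> ?s1 q \<and> ?s1 q \<le> b" if "q \<in> Q" for q
    using chain_sort_restrict_cover_in_image[OF assms(1-4) that, where f = lab] bounds by fastforce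
  have "chain_sort le C2 (chain_sort le C1 (extend_labeling Q le a b lab))
      = extend_labeling Q le a b ?s2"
    using chain_sort_extend_labeling[OF assms(1-4) \<open>a \<le> b\<close> bounds]
      chain_sort_extend_labeling[OF assms(1-3,5) \<open>a \<le> b\<close> s1_bounds] by simp
  then have ext_sorted: "nondecreasing_on_chains le C1 (extend_labeling Q le a b ?s2)"
    using sorted_P by metis
  show ?thesis
    unfolding nondecreasing_on_chains_def
  proof (intro ballI impI)
    fix c' x y
    assume "c' \<in> restrict_cover Q C1" "x \<in> c'" "y \<in> c'" "le x y"
    then obtain c where "c \<in> C1" "x \<in> c" "y \<in> c" "x \<in> Q" "y \<in> Q" "le x y"
      unfolding restrict_cover_def by blast
    then show "?s2 x \<le> ?s2 y"
      using ext_sorted unfolding nondecreasing_on_chains_def extend_labeling_def by force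
  qed
qed

lemma N2_via_restrict_cover:
  assumes "finite P" "is_poset P le" "convex_subset P le Q" "N2_via P le C1 C2"
  shows "N2_via Q le (restrict_cover Q C1) (restrict_cover Q C2)"
proof -
  have covers: "chain_cover P le C1" "chain_cover P le C2"
    and sorted: "\<And>lab. nondecreasing_on_chains le C1 (chain_sort le C2 (chain_sort le C1 lab))"
      "\<And>lab. nondecreasing_on_chains le C2 (chain_sort le C1 (chain_sort le C2 lab))"
    and edges: "\<And>x y. covers P le x y \<Longrightarrow> \<exists>c\<in>C1 \<union> C2. x \<in> c \<and> y \<in> c"
    using assms(4) unfolding N2_via_def by simp_all
  have "\<exists>c\<in>restrict_cover Q C1 \<union> restrict_cover Q C2. x \<in> c \<and> y \<in> c"
    if xy: "covers Q le x y" for x y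
  proof -
    obtain c where c: "c \<in> C1 \<union> C2" "x \<in> c" "y \<in> c"
      using edges covers_convex_subset[OF assms(3) xy] by blast
    have "x \<in> Q" "y \<in> Q"
      using xy unfolding covers_def by blast+
    moreover have "c \<inter> Q \<in> restrict_cover Q C1 \<union> restrict_cover Q C2"
      using c(1) Int_mem_restrict_cover[OF _ c(2) \<open>x \<in> Q\<close>] by blast
    ultimately show ?thesis
      using c(2,3) by (intro bexI[where x = "c \<inter> Q"]) simp_all
  qed
  then show ?thesis
    unfolding N2_via_def
    using chain_cover_restrict_cover[OF assms(3) covers(1)] chain_cover_restrict_cover[OF assms(3) covers(2)]
      nondecreasing_on_restrict_cover[OF assms(1-3) covers sorted(1)]
      nondecreasing_on_restrict_cover[OF assms(1-3) covers(2,1) sorted(2)]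
    by simp
qed

theorem theorem2p1:
  fixes P Q :: "'a set" and le :: "'a \<Rightarrow> 'a \<Rightarrow> bool"
  assumes "finite P"
    and "is_poset P le"
    and "N2 P le"
    and "convex_subset P le Q"
  shows "N2 Q le"
proof -
  obtain C1 C2 where "N2_via P le C1 C2"
    using assms(3) unfolding N2_def by blast
  then have "N2_via Q le (restrict_cover Q C1) (restrict_cover Q C2)"
    by (rule N2_via_restrict_cover[OF assms(1,2,4)])
  then show ?thesis
    unfolding N2_def by blast
qed

end
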